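(* Let $(X,\mathbb{A},d)$ be a complete $C^*$-algebra valued metric space, where $\mathbb{A}$ is a unital $C^*$-algebra. Let $T,S:X\to X$ be mappings such that $$d(T^n x,(ST)^n y)\preceq (q(x,y)^* )^n\,\delta(x,y)\,q(x,y)^n\quad\text{for all }x,y\in X,\ n\in\mathbb{N},$$ where $q:X\times X\to\mathbb{A}$ satisfies $0\le\|q(x,y)\|<1$ for all $x,y\in X$ and $\delta:X\times X\to\mathbb{A}_+$ is a mapping, and $ST$ denotes the composition $S\circ T$. If $T$ and $ST$ are both orbitally continuous on $X$, then $T$ and $S$ have a unique common fixed point in $X$.
   Context: $\mathbb{A}$ denotes a unital $C^*$-algebra with unit $I$ and zero $\theta$. An element $a\in\mathbb{A}$ is positive, written $a\succeq\theta$, if $a^*=a$ and its spectrum is contained in $[0,\infty)$; $\mathbb{A}_+$ is the set of positive elements, and $a\succeq b$ means $a-b\succeq\theta$. A $C^*$-algebra valued metric space $(X,\mathbb{A},d)$ is a nonempty set $X$ with $d:X\times X\to\mathbb{A}$ such that for all $x,y,z\in X$: $d(x,y)\succeq\theta$, with $d(x,y)=\theta$ iff $x=y$; $d(x,y)=d(y,x)$; $d(x,y)\preceq d(x,z)+d(z,y)$. A sequence $\{x_n\}$ converges to $x$ if $\|d(x_n,x)\|\to0$, and is Cauchy if $\|d(x_n,x_m)\|\to0$ as $n,m\to\infty$; the space is complete if every Cauchy sequence converges to a point of $X$. A self-map $T$ of $X$ is orbitally continuous at $u\in X$ if for every $x\in X$ and every increasing sequence of positive integers $\{n_i\}$, $\|d(T^{n_i}x,u)\|\to0$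 implies $\|d(T^{n_i+1}x,Tu)\|\to0$ as $i\to\infty$; $T$ is orbitally continuous on $X$ if it is orbitally continuous at every $u\in X$. *)

theory Defs
  imports "HOL-Analysis.Analysis"
begin

class unital_cstar_algebra = banach + real_normed_algebra_1 +
  fixes cs_scale :: "complex \<Rightarrow> 'a \<Rightarrow> 'a"
    and cs_star :: "'a \<Rightarrow> 'a"
  assumes cs_scale_add_right: "cs_scale c (a + b) = cs_scale c a + cs_scale c b"
    and cs_scale_add_left: "cs_scale (c + e) a = cs_scale c a + cs_scale e a"
    and cs_scale_scale: "cs_scale c (cs_scale e a) = cs_scale (c * e) a"
    and cs_scale_one: "cs_scale 1 a = a"
    and cs_scale_of_real: "cs_scale (complex_of_real r) a = r *\<^sub>R a"
    and cs_scale_norm: "norm (cs_scale c a) = cmod c * norm a"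
    and cs_scale_mult_left: "cs_scale c (a * b) = cs_scale c a * b"
    and cs_scale_mult_right: "cs_scale c (a * b) = a * cs_scale c b"
    and cs_star_star: "cs_star (cs_star a) = a"
    and cs_star_add: "cs_star (a + b) = cs_star a + cs_star b"
    and cs_star_scale: "cs_star (cs_scale c a) = cs_scale (cnj c) (cs_star a)"
    and cs_star_mult: "cs_star (a * b) = cs_star b * cs_star a"
    and cs_identity: "norm (cs_star a * a) = norm a ^ 2"

definition cs_spectrum :: "'a::unital_cstar_algebra \<Rightarrow> complex set" where
  "cs_spectrum a = {z. \<not> (\<exists>b. (a - cs_scale z 1) * b = 1 \<and> b * (a - cs_scale z 1) = 1)}"

definition cs_pos :: "'a::unital_cstar_algebra \<Rightarrow> bool" where
  "cs_pos a \<longleftrightarrow> cs_star a = a \<and> cs_spectrum a \<subseteq> {z. Im z = 0 \<and> Re z \<ge> 0}"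

definition cs_le :: "'a::unital_cstar_algebra \<Rightarrow> 'a \<Rightarrow> bool" where
  "cs_le a b \<longleftrightarrow> cs_pos (b - a)"

text \<open>The underlying set X is the whole (nonempty) type 'x.\<close>

definition cs_metric :: "('x \<Rightarrow> 'x \<Rightarrow> 'a::unital_cstar_algebra) \<Rightarrow> bool" where
  "cs_metric d \<longleftrightarrow>
     (\<forall>x y. cs_pos (d x y) \<and> (d x y = 0 \<longleftrightarrow> x = y)) \<and>
     (\<forall>x y. d x y = d y x) \<and>
     (\<forall>x y z. cs_le (d x y) (d x z + d z y))"

definition cs_converges :: "('x \<Rightarrow> 'x \<Rightarrow> 'a::unital_cstar_algebra) \<Rightarrow> (nat \<Rightarrow> 'x) \<Rightarrow> 'x \<Rightarrow> bool" where
  "cs_converges d s x \<longleftrightarrow> (\<lambda>n. norm (d (s n) x)) \<longlonglongrightarrow> 0"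

definition cs_cauchy :: "('x \<Rightarrow> 'x \<Rightarrow> 'a::unital_cstar_algebra) \<Rightarrow> (nat \<Rightarrow> 'x) \<Rightarrow> bool" where
  "cs_cauchy d s \<longleftrightarrow> (\<forall>e>0. \<exists>N. \<forall>n\<ge>N. \<forall>m\<ge>N. norm (d (s n) (s m)) < e)"

definition cs_complete :: "('x \<Rightarrow> 'x \<Rightarrow> 'a::unital_cstar_algebra) \<Rightarrow> bool" where
  "cs_complete d \<longleftrightarrow> (\<forall>s. cs_cauchy d s \<longrightarrow> (\<exists>x. cs_converges d s x))"

definition orbitally_continuous_at ::
  "('x \<Rightarrow> 'x \<Rightarrow> 'a::unital_cstar_algebra) \<Rightarrow> ('x \<Rightarrow> 'x) \<Rightarrow> 'x \<Rightarrow> bool" where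
  "orbitally_continuous_at d T u \<longleftrightarrow>
     (\<forall>x ni. strict_mono ni \<longrightarrow>
        cs_converges d (\<lambda>i. (T ^^ ni i) x) u \<longrightarrow>
        cs_converges d (\<lambda>i. (T ^^ (ni i + 1)) x) (T u))"

definition orbitally_continuous ::
  "('x \<Rightarrow> 'x \<Rightarrow> 'a::unital_cstar_algebra) \<Rightarrow> ('x \<Rightarrow> 'x) \<Rightarrow> bool" where
  "orbitally_continuous d T \<longleftrightarrow> (\<forall>u. orbitally_continuous_at d T u)"

end

theory Submission
  imports Defs
begin

text \<open>
  The real function \<open>norm (d x y)\<close> is a metric, because \<open>0 \<preceq> a \<preceq> b\<close> implies
  \<open>norm a \<le> norm b\<close>; this rests on the norm of a self-adjoint element being its spectral radius.
  The latter is proved without spectral theory: if \<open>1 - l x\<close> were invertible for all \<open>l\<close> on the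
  unit circle (\<open>x\<close> self-adjoint, \<open>norm x = 1\<close>), averaging these inverses over \<open>n\<close>-th roots of
  unity would invert \<open>1 - x\<^sup>n\<close> and \<open>1 + x\<^sup>n\<close> for \<open>n = 2\<^sup>k\<close>; by uniform continuity the two
  averages are close, whereas \<open>norm (x\<^sup>n) = 1\<close> by the C*-identity and
  \<open>(1 - y) (a - b) (1 + y) = 2 y\<close> keeps them apart.

  The hypothesis then gives \<open>norm (d (T\<^sup>n x) ((S \<circ> T)\<^sup>n y)) \<le> norm (\<delta> x y) * (norm (q x y)\<^sup>2)\<^sup>n\<close>.
  Comparing \<open>T\<^sup>n x\<close> and \<open>T\<^sup>n (T x)\<close> with \<open>(S \<circ> T)\<^sup>n x\<close> shows that the orbit of \<open>T\<close> is
  Cauchy; its limit \<open>u\<close> is fixed by \<open>T\<close>, and also by \<open>S \<circ> T\<close> because the orbit of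
  \<open>S \<circ> T\<close> has the same limit, so \<open>S u = u\<close>. For common fixed points \<open>v\<close> and \<open>u\<close>,
  \<open>d v u = d (T\<^sup>n v) ((S \<circ> T)\<^sup>n u)\<close> tends to \<open>0\<close>.
\<close>

section \<open>Complex scalars, involution and inverses\<close>

definition cs_of_complex :: "complex \<Rightarrow> 'a::unital_cstar_algebra" where
  "cs_of_complex c = cs_scale c 1"

definition is_inverse :: "'a::monoid_mult \<Rightarrow> 'a \<Rightarrow> bool" where
  "is_inverse a b \<longleftrightarrow> a * b = 1 \<and> b * a = 1"

lemma cs_scale_eq_mult_left: "cs_scale c a = cs_of_complex c * (a::'a::unital_cstar_algebra)"
  unfolding cs_of_complex_def using cs_scale_mult_left[of c 1 a] by simp

lemma cs_scale_eq_mult_right: "cs_scale c a = (a::'a::unital_cstar_algebra) * cs_of_complex c"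
  unfolding cs_of_complex_def using cs_scale_mult_right[of c a 1] by simp

lemma cs_of_complex_commute: "cs_of_complex c * (a::'a::unital_cstar_algebra) = a * cs_of_complex c"
  using cs_scale_eq_mult_left cs_scale_eq_mult_right by metis

lemma cs_of_complex_add: "cs_of_complex (c + e) = (cs_of_complex c + cs_of_complex e :: 'a::unital_cstar_algebra)"
  unfolding cs_of_complex_def by (rule cs_scale_add_left)

lemma cs_of_complex_mult: "cs_of_complex (c * e) = (cs_of_complex c * cs_of_complex e :: 'a::unital_cstar_algebra)"
  unfolding cs_of_complex_def by (metis cs_scale_scale cs_of_complex_def cs_scale_eq_mult_left)

lemma cs_of_complex_1 [simp]: "cs_of_complex 1 = (1 :: 'a::unital_cstar_algebra)"
  unfolding cs_of_complex_def by (rule cs_scale_one)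

lemma cs_of_complex_0 [simp]: "cs_of_complex 0 = (0 :: 'a::unital_cstar_algebra)"
  using cs_of_complex_add[of 0 0, where 'a='a] by simp

lemma cs_of_complex_minus: "cs_of_complex (- c) = (- cs_of_complex c :: 'a::unital_cstar_algebra)"
  using cs_of_complex_add[of c "-c", where 'a='a] by (simp add: add_eq_0_iff2)

lemma cs_of_complex_diff: "cs_of_complex (c - e) = (cs_of_complex c - cs_of_complex e :: 'a::unital_cstar_algebra)"
  using cs_of_complex_add[of c "-e", where 'a='a] cs_of_complex_minus[of e, where 'a='a] by simp

lemma cs_of_complex_of_real: "cs_of_complex (complex_of_real r) = (of_real r :: 'a::unital_cstar_algebra)"
  unfolding cs_of_complex_def using cs_scale_of_real[of r "1::'a"] by (simp add: of_real_def)

lemma cs_of_complex_of_nat: "cs_of_complex (of_nat n) = (of_nat n :: 'a::unital_cstar_algebra)"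
  using cs_of_complex_of_real[of "real n", where 'a='a] by simp

lemma cs_of_complex_sum: "cs_of_complex (sum f A) = (\<Sum>x\<in>A. cs_of_complex (f x) :: 'a::unital_cstar_algebra)"
  by (induction A rule: infinite_finite_induct) (simp_all add: cs_of_complex_add)

lemma norm_cs_of_complex_mult: "norm (cs_of_complex c * (a::'a::unital_cstar_algebra)) = cmod c * norm a"
  using cs_scale_norm[of c a] by (simp add: cs_scale_eq_mult_left)

lemma power_cs_of_complex_mult:
  "(cs_of_complex c * (x::'a::unital_cstar_algebra)) ^ n = cs_of_complex (c ^ n) * x ^ n"
proof (induction n)
  case (Suc n)
  have "(cs_of_complex c * x) ^ Suc n = cs_of_complex c * x * (cs_of_complex (c ^ n) * x ^ n)"
    using Suc by (simp add: power_commutes)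
  also have "\<dots> = cs_of_complex c * cs_of_complex (c ^ n) * (x * x ^ n)"
    by (metis cs_of_complex_commute mult.assoc)
  finally show ?case by (simp add: cs_of_complex_mult)
qed simp

lemma cs_star_one [simp]: "cs_star (1::'a::unital_cstar_algebra) = 1"
  by (metis cs_star_mult cs_star_star mult_1_left mult_1_right)

lemma cs_star_minus: "cs_star (- a) = - cs_star (a::'a::unital_cstar_algebra)"
proof -
  have "cs_star (0::'a) = 0" using cs_star_add[of 0 0] by simp
  hence "cs_star a + cs_star (- a) = 0" using cs_star_add[of a "- a"] by simp
  thus ?thesis by (metis add.inverse_unique)
qed

lemma cs_star_diff: "cs_star (a - b) = cs_star a - cs_star (b::'a::unital_cstar_algebra)"
  using cs_star_add[of a "-b"] cs_star_minus[of b] by simp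

lemma cs_star_cs_of_complex: "cs_star (cs_of_complex c) = (cs_of_complex (cnj c) :: 'a::unital_cstar_algebra)"
  unfolding cs_of_complex_def by (simp add: cs_star_scale)

lemma cs_star_power: "cs_star (a ^ n) = cs_star (a::'a::unital_cstar_algebra) ^ n"
  by (induction n) (simp_all add: cs_star_mult power_commutes)

lemma norm_cs_star [simp]: "norm (cs_star a) = norm (a::'a::unital_cstar_algebra)"
proof -
  have le: "norm b \<le> norm (cs_star b)" for b :: 'a
  proof (cases "b = 0")
    case False
    have "norm b ^ 2 \<le> norm (cs_star b) * norm b"
      using cs_identity[of b] norm_mult_ineq[of "cs_star b" b] by simp
    thus ?thesis using False by (simp add: power2_eq_square)
  qed simp
  show ?thesis using le[of a] le[of "cs_star a"] cs_star_star[of a] by simp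
qed

lemma norm_self_adjoint_power_2:
  assumes "cs_star h = h"
  shows "norm (h ^ (2 ^ k)) = norm (h::'a::unital_cstar_algebra) ^ (2 ^ k)"
  using assms
proof (induction k)
  case (Suc k)
  have "cs_star (h ^ 2 ^ k) = h ^ 2 ^ k" using Suc.prems by (simp add: cs_star_power)
  hence "norm (h ^ 2 ^ k * h ^ 2 ^ k) = norm (h ^ 2 ^ k) ^ 2" using cs_identity by metis
  moreover have "h ^ 2 ^ Suc k = h ^ 2 ^ k * h ^ 2 ^ k" by (simp add: power_add[symmetric] mult_2)
  ultimately show ?case using Suc by (simp add: power_mult[symmetric] mult.commute)
qed simp

lemma is_inverse_minus: "is_inverse p q \<Longrightarrow> is_inverse (- p) (- (q::'a::ring_1))"
  unfolding is_inverse_def by simp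

lemma is_inverse_scale:
  fixes p :: "'a::unital_cstar_algebra"
  assumes "is_inverse p q" "c \<noteq> 0"
  shows "is_inverse (cs_of_complex c * p) (cs_of_complex (1/c) * q)"
proof -
  have e: "cs_of_complex c * cs_of_complex (1/c) = (1::'a)" "cs_of_complex (1/c) * cs_of_complex c = (1::'a)"
    using assms(2) by (simp_all add: cs_of_complex_mult[symmetric])
  have "cs_of_complex c * p * (cs_of_complex (1/c) * q) = cs_of_complex c * cs_of_complex (1/c) * (p * q)"
    by (metis cs_of_complex_commute mult.assoc)
  moreover have "cs_of_complex (1/c) * q * (cs_of_complex c * p) = cs_of_complex (1/c) * cs_of_complex c * (q * p)"
    by (metis cs_of_complex_commute mult.assoc)
  ultimately show ?thesis using assms(1) e unfolding is_inverse_def by simp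
qed

lemma is_inverse_one_minus:
  fixes u :: "'a::{banach, real_normed_algebra_1}"
  assumes "norm u < 1"
  shows "is_inverse (1 - u) (\<Sum>n. u ^ n)"
proof -
  have "summable (\<lambda>n. norm u ^ n)" using assms by (simp add: summable_geometric)
  hence "summable (\<lambda>n. u ^ n)"
    by (rule summable_comparison_test') (simp add: norm_power_ineq)
  hence sums: "(\<lambda>n. u ^ n) sums (\<Sum>n. u ^ n)" by (simp add: summable_sums)
  have telescope: "(\<lambda>n. u ^ n - u ^ Suc n) sums 1"
    using telescope_sums'[OF LIMSEQ_power_zero[OF assms]] by simp
  have "(\<lambda>n. (1 - u) * u ^ n) = (\<lambda>n. u ^ n - u ^ Suc n)"
    by (simp add: algebra_simps)
  hence "(1 - u) * (\<Sum>n. u ^ n) = 1"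
    using sums_mult[OF sums, of "1 - u"] telescope sums_unique2 by metis
  moreover have "(\<lambda>n. u ^ n * (1 - u)) = (\<lambda>n. u ^ n - u ^ Suc n)"
    by (simp add: algebra_simps power_commutes)
  hence "(\<Sum>n. u ^ n) * (1 - u) = 1"
    using sums_mult2[OF sums, of "1 - u"] telescope sums_unique2 by metis
  ultimately show ?thesis unfolding is_inverse_def by blast
qed

section \<open>The spectrum\<close>

lemma cs_spectrum_iff: "z \<in> cs_spectrum a \<longleftrightarrow> \<not> (\<exists>b. is_inverse (a - cs_of_complex z) b)"
  unfolding cs_spectrum_def is_inverse_def cs_of_complex_def by simp

lemma cs_spectrum_norm_le:
  fixes a :: "'a::unital_cstar_algebra"
  assumes "z \<in> cs_spectrum a"
  shows "cmod z \<le> norm a"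
proof (rule ccontr)
  assume "\<not> cmod z \<le> norm a"
  hence z: "norm a < cmod z" by simp
  hence z0: "z \<noteq> 0" using norm_ge_zero[of a] by auto
  define u where "u = cs_of_complex (1/z) * a"
  have "norm u = norm a / cmod z"
    unfolding u_def by (simp add: norm_cs_of_complex_mult norm_divide)
  hence "norm u < 1" using z z0 by (simp add: divide_less_eq)
  hence "is_inverse (- (cs_of_complex z * (1 - u))) (- (cs_of_complex (1/z) * (\<Sum>n. u ^ n)))"
    by (intro is_inverse_minus is_inverse_scale is_inverse_one_minus z0)
  moreover have "- (cs_of_complex z * (1 - u)) = a - cs_of_complex z"
    unfolding u_def using z0
    by (simp add: algebra_simps mult.assoc[symmetric] cs_of_complex_mult[symmetric])
  ultimately show False using assms cs_spectrum_iff by metis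
qed

lemma cs_spectrum_shift:
  fixes a :: "'a::unital_cstar_algebra"
  shows "z \<in> cs_spectrum (cs_of_complex r - a) \<longleftrightarrow> r - z \<in> cs_spectrum a"
proof -
  have "cs_of_complex r - a - cs_of_complex z = - (a - cs_of_complex (r - z))"
    by (simp add: cs_of_complex_diff)
  thus ?thesis unfolding cs_spectrum_iff by (metis is_inverse_minus minus_minus)
qed

lemma cs_spectrum_self_adjoint_real:
  fixes h :: "'a::unital_cstar_algebra"
  assumes sa: "cs_star h = h" and z: "z \<in> cs_spectrum h"
  shows "Im z = 0"
proof -
  text \<open>Shifting by \<open>\<i>g\<close> moves \<open>z\<close> to \<open>z + \<i>g\<close> but, by the C*-identity, raises the norm
    only to \<open>sqrt (norm h\<^sup>2 + g\<^sup>2)\<close>; a large \<open>g\<close> of the sign of \<open>Im z\<close> then contradicts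
    \<open>cs_spectrum_norm_le\<close>.\<close>
  have shifted: "(Im z + g)\<^sup>2 \<le> norm h ^ 2 + g\<^sup>2" for g :: real
  proof -
    define k where "k = h + cs_of_complex (\<i> * of_real g)"
    have "k - cs_of_complex (z + \<i> * of_real g) = h - cs_of_complex z"
      unfolding k_def by (simp add: cs_of_complex_add)
    hence "z + \<i> * of_real g \<in> cs_spectrum k" using z by (simp add: cs_spectrum_iff)
    hence c: "cmod (z + \<i> * of_real g) \<le> norm k" by (rule cs_spectrum_norm_le)
    have "cs_star k * k = h * h + (cs_of_complex (- (\<i> * of_real g)) * h + h * cs_of_complex (\<i> * of_real g))
          + cs_of_complex (- (\<i> * of_real g)) * cs_of_complex (\<i> * of_real g)"
      unfolding k_def by (simp add: cs_star_add sa cs_star_cs_of_complex algebra_simps)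
    also have "cs_of_complex (- (\<i> * of_real g)) * h + h * cs_of_complex (\<i> * of_real g) = 0"
      by (simp add: cs_of_complex_minus cs_of_complex_commute)
    also have "cs_of_complex (- (\<i> * of_real g)) * cs_of_complex (\<i> * of_real g)
               = (cs_of_complex (of_real (g\<^sup>2)) :: 'a)"
      by (simp add: cs_of_complex_mult[symmetric] power2_eq_square algebra_simps)
    finally have "cs_star k * k = h * h + of_real (g\<^sup>2)"
      using cs_of_complex_of_real[of "g\<^sup>2", where 'a='a] by simp
    hence "norm k ^ 2 = norm (h * h + of_real (g\<^sup>2))" using cs_identity[of k] by simp
    also have "\<dots> \<le> norm (h * h) + g\<^sup>2"
    proof -
      have "norm (of_real (g\<^sup>2) :: 'a) = g\<^sup>2" by (simp only: norm_of_real) simp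
      thus ?thesis using norm_triangle_ineq[of "h * h" "of_real (g\<^sup>2)"] by linarith
    qed
    also have "norm (h * h) = norm h ^ 2" using cs_identity[of h] sa by simp
    finally have "norm k ^ 2 \<le> norm h ^ 2 + g\<^sup>2" .
    moreover have "cmod (z + \<i> * of_real g) ^ 2 = Re z ^ 2 + (Im z + g)\<^sup>2"
      by (simp add: cmod_def)
    moreover have "cmod (z + \<i> * of_real g) ^ 2 \<le> norm k ^ 2"
      using c by (simp add: power_mono)
    ultimately show ?thesis by (smt (verit) zero_le_power2)
  qed
  show ?thesis
  proof (rule ccontr)
    assume ne: "Im z \<noteq> 0"
    have "(Im z + norm h ^ 2 / (2 * Im z))\<^sup>2 \<le> norm h ^ 2 + (norm h ^ 2 / (2 * Im z))\<^sup>2"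
      by (rule shifted)
    moreover have "2 * Im z * (norm h ^ 2 / (2 * Im z)) = norm h ^ 2" using ne by simp
    ultimately have "Im z ^ 2 \<le> 0" unfolding power2_sum by linarith
    thus False using ne by simp
  qed
qed

section \<open>The norm of a self-adjoint element is its spectral radius\<close>

lemma one_minus_mult_geometric_sum:
  fixes a :: "'b::ring_1"
  shows "(1 - a) * (\<Sum>m<n. a ^ m) = 1 - a ^ n" and "(\<Sum>m<n. a ^ m) * (1 - a) = 1 - a ^ n"
proof -
  have "(1 - a) * (\<Sum>m<n. a ^ m) = (\<Sum>m<n. a ^ m - a ^ Suc m)"
    unfolding sum_distrib_left by (intro sum.cong) (simp_all add: left_diff_distrib)
  thus "(1 - a) * (\<Sum>m<n. a ^ m) = 1 - a ^ n" by (simp only: sum_lessThan_telescope') simp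
  have "(\<Sum>m<n. a ^ m) * (1 - a) = (\<Sum>m<n. a ^ m - a ^ Suc m)"
    unfolding sum_distrib_right by (intro sum.cong) (simp_all add: right_diff_distrib power_commutes)
  thus "(\<Sum>m<n. a ^ m) * (1 - a) = 1 - a ^ n" by (simp only: sum_lessThan_telescope') simp
qed

lemma sum_roots_of_unity_power:
  assumes "0 < n" "m < n"
  shows "(\<Sum>j<n. (cis (2 * pi / real n) ^ j) ^ m) = (if m = 0 then of_nat n else 0)"
proof (cases "m = 0")
  case False
  define w where "w = cis (2 * pi / real n) ^ m"
  have w: "w = cis (2 * pi * real m / real n)"
    unfolding w_def by (simp add: Complex.DeMoivre mult_ac)
  have "w \<noteq> 1"
  proof
    assume "w = 1"
    hence "cis (2 * pi * real m / real n) = cis (2 * pi * real 0 / real n)" using w by simp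
    with Complex.bij_betw_roots_unity[OF assms(1)] have "m = 0"
      unfolding bij_betw_def inj_on_def using assms by blast
    with False show False by simp
  qed
  moreover have "w ^ n = 1"
  proof -
    have "w ^ n = cis (2 * pi * real m)" unfolding w using assms by (simp add: Complex.DeMoivre)
    also have "\<dots> = 1" by (simp add: cis_multiple_2pi)
    finally show ?thesis .
  qed
  moreover have "(\<Sum>j<n. (cis (2 * pi / real n) ^ j) ^ m) = (\<Sum>j<n. w ^ j)"
    unfolding w_def by (simp add: power_mult[symmetric] mult.commute)
  ultimately show ?thesis using False by (simp add: geometric_sum)
qed simp

lemma root_of_unity_power_eq_1:
  assumes "0 < n"
  shows "(cis (2 * pi / real n) ^ j) ^ n = 1"
proof -
  have "(cis (2 * pi / real n) ^ j) ^ n = (cis (2 * pi / real n) ^ n) ^ j"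
    by (simp only: power_mult[symmetric] mult.commute)
  also have "cis (2 * pi / real n) ^ n = 1" using assms by (simp add: Complex.DeMoivre)
  finally show ?thesis by simp
qed

text \<open>For every \<open>n\<close>-th root \<open>z\<close> of \<open>l\<^sup>n\<close>, \<open>F z\<close> multiplies \<open>1 - l\<^sup>n x\<^sup>n\<close> to \<open>\<Sum>m<n. z\<^sup>m x\<^sup>m\<close>;
  summing over these roots kills every term with \<open>0 < m\<close>.\<close>

lemma is_inverse_mean_over_roots:
  fixes x :: "'a::unital_cstar_algebra"
  assumes n: "0 < n"
    and F: "\<And>z. cmod z = 1 \<Longrightarrow> is_inverse (1 - cs_of_complex z * x) (F z)"
    and l: "cmod l = 1"
  shows "is_inverse (1 - cs_of_complex (l ^ n) * x ^ n)
           ((1 / real n) *\<^sub>R (\<Sum>j<n. F (cis (2 * pi / real n) ^ j * l)))"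
proof -
  define w where "w = cis (2 * pi / real n)"
  define Y where "Y = 1 - cs_of_complex (l ^ n) * x ^ n"
  have partial_sum: "F z * Y = (\<Sum>m<n. cs_of_complex (z ^ m) * x ^ m)
                     \<and> Y * F z = (\<Sum>m<n. cs_of_complex (z ^ m) * x ^ m)"
    if z: "cmod z = 1" "z ^ n = l ^ n" for z
  proof -
    define a where "a = cs_of_complex z * x"
    have inv: "is_inverse (1 - a) (F z)" unfolding a_def by (rule F[OF z(1)])
    have Y: "Y = 1 - a ^ n" unfolding Y_def a_def power_cs_of_complex_mult z(2) ..
    have sum: "(\<Sum>m<n. a ^ m) = (\<Sum>m<n. cs_of_complex (z ^ m) * x ^ m)"
      unfolding a_def power_cs_of_complex_mult ..
    have "F z * Y = F z * (1 - a) * (\<Sum>m<n. a ^ m)"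
      unfolding Y one_minus_mult_geometric_sum(1)[symmetric] by (simp add: mult.assoc)
    moreover have "Y * F z = (\<Sum>m<n. a ^ m) * ((1 - a) * F z)"
      unfolding Y one_minus_mult_geometric_sum(2)[symmetric] by (simp add: mult.assoc)
    ultimately show ?thesis using inv sum unfolding is_inverse_def by simp
  qed
  have roots: "cmod (w ^ j * l) = 1" "(w ^ j * l) ^ n = l ^ n" for j
    using l root_of_unity_power_eq_1[OF n, of j] unfolding w_def
    by (simp_all add: norm_mult norm_power power_mult_distrib)
  have total: "(\<Sum>j<n. \<Sum>m<n. cs_of_complex ((w ^ j * l) ^ m) * x ^ m) = (of_nat n :: 'a)"
  proof -
    have "(\<Sum>j<n. \<Sum>m<n. cs_of_complex ((w ^ j * l) ^ m) * x ^ m)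
        = (\<Sum>m<n. \<Sum>j<n. cs_of_complex ((w ^ j) ^ m * l ^ m) * x ^ m)"
      by (subst sum.swap) (simp add: power_mult_distrib)
    also have "\<dots> = (\<Sum>m<n. cs_of_complex ((\<Sum>j<n. (w ^ j) ^ m) * l ^ m) * x ^ m)"
      by (simp add: sum_distrib_right cs_of_complex_sum)
    also have "\<dots> = (\<Sum>m<n. if m = 0 then (of_nat n :: 'a) else 0)"
      using sum_roots_of_unity_power[OF n] unfolding w_def[symmetric]
      by (intro sum.cong refl) (simp add: cs_of_complex_of_nat)
    also have "\<dots> = of_nat n" using n by simp
    finally show ?thesis .
  qed
  have "(\<Sum>j<n. F (w ^ j * l)) * Y = of_nat n" "Y * (\<Sum>j<n. F (w ^ j * l)) = of_nat n"
    using partial_sum[OF roots] total by (simp_all add: sum_distrib_right sum_distrib_left)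
  moreover have "(1 / real n) *\<^sub>R (of_nat n :: 'a) = 1"
  proof -
    have "(of_nat n :: 'a) = real n *\<^sub>R 1" by (simp add: scaleR_conv_of_real)
    thus ?thesis using n by simp
  qed
  ultimately show ?thesis unfolding is_inverse_def Y_def w_def by simp
qed

lemma resolvent_difference:
  fixes x :: "'a::unital_cstar_algebra"
  assumes "is_inverse (1 - cs_of_complex z * x) a" "is_inverse (1 - cs_of_complex w * x) b"
  shows "b - a = b * (cs_of_complex (w - z) * x) * a"
proof -
  have "b * (cs_of_complex (w - z) * x) * a
        = b * (1 - cs_of_complex z * x) * a - b * (1 - cs_of_complex w * x) * a"
    by (simp add: cs_of_complex_diff algebra_simps)
  thus ?thesis using assms unfolding is_inverse_def by (simp add: mult.assoc)
qed

lemma continuous_on_resolvent: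
  fixes x :: "'a::unital_cstar_algebra"
  assumes nx: "norm x = 1"
    and F: "\<And>z. cmod z = 1 \<Longrightarrow> is_inverse (1 - cs_of_complex z * x) (F z)"
  shows "continuous_on (sphere 0 1) F"
  unfolding continuous_on_iff
proof (intro ballI allI impI)
  fix z e assume z: "z \<in> sphere (0::complex) 1" and e: "(0::real) < e"
  define B where "B = norm (F z) + 1"
  have B: "B \<ge> 1" unfolding B_def by simp
  define d where "d = min (1 / (2 * B)) (e / (2 * B\<^sup>2))"
  show "\<exists>d>0. \<forall>w\<in>sphere 0 1. dist w z < d \<longrightarrow> dist (F w) (F z) < e"
  proof (intro exI conjI ballI impI)
    show "d > 0" unfolding d_def using B e by simp
    fix w assume w: "w \<in> sphere (0::complex) 1" and "dist w z < d"
    hence wz: "cmod (w - z) < d" by (simp add: dist_norm)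
    have "F w - F z = F w * (cs_of_complex (w - z) * x) * F z"
      using z w by (intro resolvent_difference F) simp_all
    hence "norm (F w - F z) \<le> norm (F w * (cs_of_complex (w - z) * x)) * norm (F z)"
      by (simp add: norm_mult_ineq)
    also have "\<dots> \<le> norm (F w) * cmod (w - z) * norm (F z)"
      using norm_mult_ineq[of "F w" "cs_of_complex (w - z) * x"] nx
      by (intro mult_right_mono) (simp_all add: norm_cs_of_complex_mult)
    also have "\<dots> \<le> norm (F w) * cmod (w - z) * B"
      unfolding B_def by (intro mult_left_mono) simp_all
    finally have lip: "norm (F w - F z) \<le> norm (F w) * (cmod (w - z) * B)" by (simp add: mult.assoc)
    have "cmod (w - z) * B \<le> 1/2"
      using mult_right_mono[of "cmod (w - z)" "1 / (2 * B)" B] wz B unfolding d_def by simp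
    hence "norm (F w) * (cmod (w - z) * B) \<le> norm (F w) / 2"
      using mult_left_mono[of _ "1/2" "norm (F w)"] by simp
    moreover have "norm (F w) \<le> norm (F z) + norm (F w - F z)"
      using norm_triangle_ineq[of "F z" "F w - F z"] by simp
    moreover have "norm (F z) \<le> B" unfolding B_def by simp
    ultimately have "norm (F w) \<le> 2 * B" using lip by linarith
    hence "norm (F w) * (cmod (w - z) * B) \<le> 2 * B * (cmod (w - z) * B)"
      by (rule mult_right_mono) (use B in simp)
    hence "norm (F w - F z) \<le> 2 * B\<^sup>2 * cmod (w - z)"
      using lip by (simp add: power2_eq_square mult_ac)
    also have "\<dots> < 2 * B\<^sup>2 * (e / (2 * B\<^sup>2))"
      using wz B unfolding d_def by (intro mult_strict_left_mono) simp_all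
    also have "\<dots> = e" using B by simp
    finally show "dist (F w) (F z) < e" by (simp add: dist_norm)
  qed
qed

lemma norm_inverse_diff_ge:
  fixes y :: "'a::real_normed_algebra_1"
  assumes ny: "norm y = 1" and a: "is_inverse (1 - y) a" and b: "is_inverse (1 + y) b"
  shows "1/2 \<le> norm (a - b)"
proof -
  have "(1 - y) * (a - b) * (1 + y) = ((1 - y) * a) * (1 + y) - (1 - y) * (b * (1 + y))"
    by (simp add: algebra_simps)
  also have "\<dots> = 2 *\<^sub>R y" using a b unfolding is_inverse_def by (simp add: scaleR_2)
  finally have "2 = norm ((1 - y) * (a - b) * (1 + y))" using ny by simp
  also have "\<dots> \<le> norm (1 - y) * norm (a - b) * norm (1 + y)"
    by (meson norm_mult_ineq mult_right_mono norm_ge_zero order_trans)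
  also have "\<dots> \<le> 2 * norm (a - b) * 2"
    using norm_triangle_ineq4[of 1 y] norm_triangle_ineq[of 1 y] ny by (intro mult_mono) simp_all
  finally show ?thesis by simp
qed

lemma norm_mean_diff_less:
  fixes f g :: "nat \<Rightarrow> 'a::real_normed_vector"
  assumes "0 < n" and "\<And>j. j < n \<Longrightarrow> norm (f j - g j) < e"
  shows "norm ((1 / real n) *\<^sub>R (\<Sum>j<n. f j) - (1 / real n) *\<^sub>R (\<Sum>j<n. g j)) < e"
proof -
  have "norm ((1 / real n) *\<^sub>R (\<Sum>j<n. f j) - (1 / real n) *\<^sub>R (\<Sum>j<n. g j))
        = norm (\<Sum>j<n. f j - g j) / real n"
    by (simp flip: scaleR_diff_right sum_subtractf add: divide_inverse mult.commute)
  also have "\<dots> < (\<Sum>j<n. e) / real n"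
    using assms by (intro divide_strict_right_mono le_less_trans[OF norm_sum] sum_strict_mono) auto
  also have "\<dots> = e" using assms(1) by simp
  finally show ?thesis .
qed

lemma root_of_minus_one_near_1:
  assumes "0 < e"
  shows "\<exists>k \<zeta>. cmod \<zeta> = 1 \<and> \<zeta> ^ 2 ^ k = -1 \<and> cmod (\<zeta> - 1) < e"
proof -
  have "(\<lambda>k. cis (pi * (1/2) ^ k)) \<longlonglongrightarrow> cis 0"
    by (intro tendsto_cis tendsto_mult_right_zero LIMSEQ_power_zero) simp
  then obtain k where "cmod (cis (pi * (1/2) ^ k) - 1) < e"
    using assms by (metis cis_zero LIMSEQ_D dist_norm order_refl)
  moreover have "cis (pi * (1/2) ^ k) ^ 2 ^ k = -1"
    by (simp add: Complex.DeMoivre power_one_over)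
  ultimately show ?thesis by force
qed

lemma self_adjoint_not_invertible_on_circle:
  fixes x :: "'a::unital_cstar_algebra"
  assumes sa: "cs_star x = x" and nx: "norm x = 1"
  shows "\<exists>l. cmod l = 1 \<and> \<not> (\<exists>b. is_inverse (1 - cs_of_complex l * x) b)"
proof (rule ccontr)
  assume inv: "\<not> ?thesis"
  define F where "F l = (SOME b. is_inverse (1 - cs_of_complex l * x) b)" for l
  have F: "is_inverse (1 - cs_of_complex l * x) (F l)" if "cmod l = 1" for l
    unfolding F_def using inv that by (metis someI_ex)
  have "uniformly_continuous_on (sphere 0 1) F"
    by (rule compact_uniformly_continuous[OF continuous_on_resolvent[OF nx F] compact_sphere])
  then obtain e where "e > 0" and close:
    "\<And>z z'. z \<in> sphere 0 1 \<Longrightarrow> z' \<in> sphere 0 1 \<Longrightarrow> dist z' z < e \<Longrightarrow> dist (F z') (F z) < 1/4"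
    unfolding uniformly_continuous_on_def by (metis divide_pos_pos zero_less_numeral zero_less_one)
  obtain k \<zeta> where \<zeta>: "cmod \<zeta> = 1" "\<zeta> ^ 2 ^ k = -1" and k: "cmod (\<zeta> - 1) < e"
    using root_of_minus_one_near_1[OF \<open>e > 0\<close>] by blast
  define n :: nat where "n = 2 ^ k"
  define w where "w = cis (2 * pi / real n)"
  have n: "0 < n" unfolding n_def by simp
  have "is_inverse (1 - x ^ n) ((1 / real n) *\<^sub>R (\<Sum>j<n. F (w ^ j * 1)))"
    using is_inverse_mean_over_roots[OF n F, of 1] unfolding w_def by simp
  moreover have "is_inverse (1 + x ^ n) ((1 / real n) *\<^sub>R (\<Sum>j<n. F (w ^ j * \<zeta>)))"
    using is_inverse_mean_over_roots[OF n F \<zeta>(1)] \<zeta>(2) unfolding w_def n_def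
    by (simp add: cs_of_complex_minus)
  moreover have "norm (x ^ n) = 1"
    unfolding n_def using norm_self_adjoint_power_2[OF sa, of k] nx by simp
  ultimately have "1/2 \<le> norm ((1 / real n) *\<^sub>R (\<Sum>j<n. F (w ^ j * 1))
                                 - (1 / real n) *\<^sub>R (\<Sum>j<n. F (w ^ j * \<zeta>)))"
    by (rule norm_inverse_diff_ge[rotated])
  moreover have "norm ((1 / real n) *\<^sub>R (\<Sum>j<n. F (w ^ j * 1))
                       - (1 / real n) *\<^sub>R (\<Sum>j<n. F (w ^ j * \<zeta>))) < 1/4"
  proof (rule norm_mean_diff_less[OF n])
    fix j
    have wj: "cmod (w ^ j) = 1" unfolding w_def by (simp add: norm_power)
    have "dist (w ^ j * \<zeta>) (w ^ j * 1) = cmod (w ^ j) * cmod (\<zeta> - 1)"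
      by (simp add: dist_norm norm_mult[symmetric] right_diff_distrib)
    hence "dist (w ^ j * \<zeta>) (w ^ j * 1) < e" using wj k by simp
    hence "dist (F (w ^ j * \<zeta>)) (F (w ^ j * 1)) < 1/4"
      using wj \<zeta> by (intro close) (simp_all add: norm_mult)
    thus "norm (F (w ^ j * 1) - F (w ^ j * \<zeta>)) < 1/4" by (simp add: dist_norm norm_minus_commute)
  qed
  ultimately show False by simp
qed

lemma norm_self_adjoint_le:
  fixes h :: "'a::unital_cstar_algebra"
  assumes sa: "cs_star h = h" and r: "0 \<le> r"
    and spectrum: "\<And>z. z \<in> cs_spectrum h \<Longrightarrow> cmod z \<le> r"
  shows "norm h \<le> r"
proof (rule ccontr)
  assume "\<not> norm h \<le> r"
  hence m: "r < norm h" "0 < norm h" using r by linarith+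
  define x where "x = cs_of_complex (complex_of_real (1 / norm h)) * h"
  have "cs_star x = x"
    unfolding x_def by (simp add: cs_star_mult sa cs_star_cs_of_complex cs_of_complex_commute)
  moreover have "norm x = 1" unfolding x_def using m by (simp add: norm_cs_of_complex_mult norm_divide)
  ultimately obtain l where l: "cmod l = 1" and not_inv: "\<not> (\<exists>b. is_inverse (1 - cs_of_complex l * x) b)"
    using self_adjoint_not_invertible_on_circle by blast
  have l0: "l \<noteq> 0" using l by auto
  have "cmod (complex_of_real (norm h) / l) = norm h" using l by (simp add: norm_divide)
  hence "complex_of_real (norm h) / l \<notin> cs_spectrum h" using spectrum m by force
  then obtain b where "is_inverse (h - cs_of_complex (complex_of_real (norm h) / l)) b"
    unfolding cs_spectrum_iff by blast
  hence "is_inverse (- (cs_of_complex (l / norm h) * (h - cs_of_complex (norm h / l))))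
                    (- (cs_of_complex (1 / (l / norm h)) * b))"
    using l0 m by (intro is_inverse_minus is_inverse_scale) simp_all
  moreover have "- (cs_of_complex (l / norm h) * (h - cs_of_complex (norm h / l))) = 1 - cs_of_complex l * x"
  proof -
    have "cs_of_complex (l / norm h) * cs_of_complex (norm h / l) = (1::'a)"
      using l0 m by (simp flip: cs_of_complex_mult)
    moreover have "cs_of_complex (l / norm h) * h = cs_of_complex l * x"
      unfolding x_def by (simp add: mult.assoc[symmetric] cs_of_complex_mult[symmetric] divide_inverse)
    ultimately show ?thesis by (simp add: right_diff_distrib)
  qed
  ultimately show False using not_inv by auto
qed

section \<open>Positivity and the norm\<close>

lemma norm_shift_le_if_cs_pos:
  fixes a :: "'a::unital_cstar_algebra"
  assumes a: "cs_pos a" and R: "norm a \<le> R"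
  shows "norm (cs_of_complex (complex_of_real R) - a) \<le> R"
proof (rule norm_self_adjoint_le)
  show "cs_star (cs_of_complex (complex_of_real R) - a) = cs_of_complex (complex_of_real R) - a"
    using a unfolding cs_pos_def by (simp add: cs_star_diff cs_star_cs_of_complex)
  show "0 \<le> R" using R norm_ge_zero[of a] by linarith
  fix z assume "z \<in> cs_spectrum (cs_of_complex (complex_of_real R) - a)"
  hence s: "complex_of_real R - z \<in> cs_spectrum a" by (simp add: cs_spectrum_shift)
  hence "Im z = 0" and re: "Re (complex_of_real R - z) \<ge> 0"
    using a unfolding cs_pos_def by auto
  moreover have "\<bar>Re (complex_of_real R - z)\<bar> \<le> R"
    using cs_spectrum_norm_le[OF s] abs_Re_le_cmod[of "complex_of_real R - z"] R by linarith
  ultimately show "cmod z \<le> R" using re by (simp add: cmod_eq_Re)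
qed

lemma cs_pos_if_norm_shift_le:
  fixes h :: "'a::unital_cstar_algebra"
  assumes sa: "cs_star h = h" and R: "norm (cs_of_complex (complex_of_real R) - h) \<le> R"
  shows "cs_pos h"
  unfolding cs_pos_def
proof (intro conjI subsetI CollectI)
  show "cs_star h = h" by (rule sa)
  fix z assume z: "z \<in> cs_spectrum h"
  show "Im z = 0" by (rule cs_spectrum_self_adjoint_real[OF sa z])
  have "complex_of_real R - z \<in> cs_spectrum (cs_of_complex (complex_of_real R) - h)"
    using z by (simp add: cs_spectrum_shift)
  hence "cmod (complex_of_real R - z) \<le> R" using cs_spectrum_norm_le R by (meson order_trans)
  hence "\<bar>R - Re z\<bar> \<le> R" using abs_Re_le_cmod[of "complex_of_real R - z"] by simp
  thus "Re z \<ge> 0" by linarith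
qed

lemma cs_pos_add:
  fixes a c :: "'a::unital_cstar_algebra"
  assumes a: "cs_pos a" and c: "cs_pos c"
  shows "cs_pos (a + c)"
proof (rule cs_pos_if_norm_shift_le)
  show "cs_star (a + c) = a + c" using a c unfolding cs_pos_def by (simp add: cs_star_add)
  have "cs_of_complex (complex_of_real (norm a + norm c)) - (a + c)
        = (cs_of_complex (complex_of_real (norm a)) - a) + (cs_of_complex (complex_of_real (norm c)) - c)"
    by (simp add: cs_of_complex_add)
  also have "norm \<dots> \<le> norm a + norm c"
    using norm_triangle_ineq norm_shift_le_if_cs_pos[OF a order_refl]
      norm_shift_le_if_cs_pos[OF c order_refl] by (smt (verit))
  finally show "norm (cs_of_complex (complex_of_real (norm a + norm c)) - (a + c)) \<le> norm a + norm c" .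
qed

lemma norm_le_if_cs_le:
  fixes a b :: "'a::unital_cstar_algebra"
  assumes a: "cs_pos a" and ab: "cs_le a b"
  shows "norm a \<le> norm b"
proof (rule norm_self_adjoint_le)
  show a_sa: "cs_star a = a" using a unfolding cs_pos_def by simp
  show "0 \<le> norm b" by simp
  let ?t = "cs_of_complex (complex_of_real (norm b))"
  have ba: "cs_pos (b - a)" using ab unfolding cs_le_def .
  hence "cs_pos b" using cs_pos_add[OF a] by fastforce
  hence "cs_pos (?t - b)"
    by (intro cs_pos_if_norm_shift_le[where R = "norm b"]) (simp_all add: cs_pos_def cs_star_diff cs_star_cs_of_complex)
  hence ta: "cs_pos (?t - a)" using cs_pos_add[OF _ ba] by fastforce
  fix z assume z: "z \<in> cs_spectrum a"
  hence "complex_of_real (norm b) - z \<in> cs_spectrum (?t - a)" by (simp add: cs_spectrum_shift)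
  hence "Re (complex_of_real (norm b) - z) \<ge> 0" using ta unfolding cs_pos_def by auto
  moreover have "Im z = 0" "Re z \<ge> 0" using z a unfolding cs_pos_def by auto
  ultimately show "cmod z \<le> norm b" by (simp add: cmod_eq_Re)
qed

lemma norm_star_power_mult_power_le:
  fixes b c :: "'a::unital_cstar_algebra"
  shows "norm (cs_star c ^ n * b * c ^ n) \<le> norm b * (norm c ^ 2) ^ n"
proof -
  have "norm (cs_star c ^ n * b * c ^ n) \<le> norm (cs_star c ^ n) * norm b * norm (c ^ n)"
    by (meson norm_mult_ineq mult_right_mono norm_ge_zero order_trans)
  also have "\<dots> \<le> norm c ^ n * norm b * norm c ^ n"
    using norm_power_ineq[of "cs_star c" n] norm_power_ineq[of c n] by (intro mult_mono) simp_all
  also have "\<dots> = norm b * (norm c ^ 2) ^ n"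
    by (simp add: power2_eq_square power_mult_distrib mult_ac)
  finally show ?thesis .
qed

section \<open>C*-algebra valued metric spaces\<close>

lemma funpow_fixpoint: "f x = x \<Longrightarrow> (f ^^ n) x = x"
  by (induction n) auto

context
  fixes d :: "'x \<Rightarrow> 'x \<Rightarrow> 'a::unital_cstar_algebra"
  assumes metric: "cs_metric d"
begin

lemma cs_dist_commute: "d x y = d y x"
  using metric unfolding cs_metric_def by blast

lemma cs_dist_eq_0_iff: "d x y = 0 \<longleftrightarrow> x = y"
  using metric unfolding cs_metric_def by blast

lemma norm_cs_dist_le_if_cs_le: "cs_le (d x y) b \<Longrightarrow> norm (d x y) \<le> norm b"
  using metric norm_le_if_cs_le unfolding cs_metric_def by blast

lemma norm_cs_dist_triangle: "norm (d x y) \<le> norm (d x z) + norm (d z y)"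
proof -
  have "norm (d x y) \<le> norm (d x z + d z y)"
    using metric unfolding cs_metric_def by (blast intro: norm_cs_dist_le_if_cs_le)
  thus ?thesis using norm_triangle_ineq order_trans by blast
qed

lemma cs_converges_unique:
  assumes "cs_converges d s a" and "cs_converges d s b"
  shows "a = b"
proof -
  have "(\<lambda>n. norm (d (s n) a) + norm (d (s n) b)) \<longlonglongrightarrow> 0"
    using assms unfolding cs_converges_def by (simp add: tendsto_add_zero)
  moreover have "norm (d a b) \<le> norm (d (s n) a) + norm (d (s n) b)" for n
    using norm_cs_dist_triangle[of a b "s n"] by (simp add: cs_dist_commute)
  ultimately have "norm (d a b) \<le> 0" by (intro LIMSEQ_le_const[of _ 0]) auto
  thus ?thesis by (simp add: cs_dist_eq_0_iff)
qed

lemma cs_converges_if_dist_tendsto_0: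
  assumes "cs_converges d s u" and "(\<lambda>n. norm (d (t n) (s n))) \<longlonglongrightarrow> 0"
  shows "cs_converges d t u"
  unfolding cs_converges_def
proof (rule tendsto_sandwich[of "\<lambda>n. 0" _ _ "\<lambda>n. norm (d (t n) (s n)) + norm (d (s n) u)"])
  show "(\<lambda>n. norm (d (t n) (s n)) + norm (d (s n) u)) \<longlonglongrightarrow> 0"
    using assms unfolding cs_converges_def by (simp add: tendsto_add_zero)
qed (simp_all add: norm_cs_dist_triangle)

lemma cs_cauchy_if_geometric_steps:
  assumes steps: "\<And>n. norm (d (s n) (s (Suc n))) \<le> C * r ^ n" and r: "0 \<le> r" "r < 1"
  shows "cs_cauchy d s"
proof -
  have "norm (d (s 0) (s (Suc 0))) \<le> C" using steps[of 0] by simp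
  hence C: "0 \<le> C" by (rule order_trans[OF norm_ge_zero])
  have geometric_tail: "(\<Sum>i<k. r ^ (n + i)) \<le> r ^ n / (1 - r)" for n k
  proof -
    have "(\<Sum>i<k. r ^ (n + i)) = r ^ n * (\<Sum>i<k. r ^ i)" by (simp add: power_add sum_distrib_left)
    also have "(\<Sum>i<k. r ^ i) = (1 - r ^ k) / (1 - r)" using r by (simp add: sum_gp_strict)
    also have "\<dots> \<le> 1 / (1 - r)" using r by (simp add: divide_right_mono)
    finally show ?thesis using r by (simp add: mult_left_mono divide_inverse)
  qed
  have tail: "norm (d (s n) (s (n + k))) \<le> C * (r ^ n / (1 - r))" for n k
  proof -
    have "norm (d (s n) (s (n + k))) \<le> C * (\<Sum>i<k. r ^ (n + i))"
    proof (induction k)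
      case (Suc k)
      have "norm (d (s n) (s (n + Suc k))) \<le> norm (d (s n) (s (n + k))) + norm (d (s (n + k)) (s (Suc (n + k))))"
        using norm_cs_dist_triangle by simp
      also have "\<dots> \<le> C * (\<Sum>i<Suc k. r ^ (n + i))"
        using Suc steps[of "n + k"] by (simp add: distrib_left)
      finally show ?case .
    qed (simp add: cs_dist_eq_0_iff)
    also have "\<dots> \<le> C * (r ^ n / (1 - r))" using geometric_tail C by (rule mult_left_mono)
    finally show ?thesis .
  qed
  have lim: "(\<lambda>N. C * (r ^ N / (1 - r))) \<longlonglongrightarrow> 0"
    using r by (intro tendsto_divide_zero tendsto_mult_right_zero LIMSEQ_power_zero) simp
  show ?thesis
    unfolding cs_cauchy_def
  proof (intro allI impI)
    fix e :: real assume "e > 0"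
    then obtain N where N: "\<And>n. n \<ge> N \<Longrightarrow> C * (r ^ n / (1 - r)) < e"
      using order_tendstoD(2)[OF lim] unfolding eventually_sequentially by blast
    have "norm (d (s n) (s m)) < e" if "n \<ge> N" "m \<ge> N" for n m
    proof (cases "n \<le> m")
      case True
      thus ?thesis using tail[of n "m - n"] N[of n] that by simp
    next
      case False
      thus ?thesis using tail[of m "n - m"] N[of m] that by (simp add: cs_dist_commute)
    qed
    thus "\<exists>N. \<forall>n\<ge>N. \<forall>m\<ge>N. norm (d (s n) (s m)) < e" by blast
  qed
qed

lemma orbitally_continuous_fixed_point:
  assumes "orbitally_continuous d T" and "cs_converges d (\<lambda>n. (T ^^ n) x) u"
  shows "T u = u"
proof (rule cs_converges_unique)
  have "cs_converges d (\<lambda>n. (T ^^ (n + 1)) x) (T u)"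
    using assms strict_mono_id unfolding orbitally_continuous_def orbitally_continuous_at_def id_def
    by blast
  thus "cs_converges d (\<lambda>n. (T ^^ Suc n) x) (T u)" by simp
  show "cs_converges d (\<lambda>n. (T ^^ Suc n) x) u"
    using assms(2) LIMSEQ_Suc unfolding cs_converges_def by fastforce
qed

text \<open>The hypothesis of the theorem becomes the following estimate for \<open>U = S \<circ> T\<close>,
  \<open>c x y = norm (\<delta> x y)\<close> and \<open>r x y = norm (q x y)\<^sup>2\<close>.\<close>

context
  fixes T U :: "'x \<Rightarrow> 'x" and c r :: "'x \<Rightarrow> 'x \<Rightarrow> real"
  assumes paired_contraction:
      "\<And>x y n. 1 \<le> n \<Longrightarrow> norm (d ((T ^^ n) x) ((U ^^ n) y)) \<le> c x y * r x y ^ n"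
    and c_nonneg: "\<And>x y. 0 \<le> c x y"
    and r_nonneg: "\<And>x y. 0 \<le> r x y"
    and r_less_1: "\<And>x y. r x y < 1"
begin

lemma paired_contraction_tendsto_0: "(\<lambda>n. c x y * r x y ^ n) \<longlonglongrightarrow> 0"
  using r_nonneg r_less_1 by (intro tendsto_mult_right_zero LIMSEQ_power_zero) simp

lemma cs_cauchy_orbit: "cs_cauchy d (\<lambda>n. (T ^^ n) x)"
proof (rule cs_cauchy_if_geometric_steps)
  define \<rho> where "\<rho> = max (r x x) (r (T x) x)"
  show "0 \<le> \<rho>" "\<rho> < 1" unfolding \<rho>_def using r_nonneg r_less_1 by (simp_all add: le_max_iff_disj)
  fix n
  show "norm (d ((T ^^ n) x) ((T ^^ Suc n) x)) \<le> (c x x + c (T x) x + norm (d x (T x))) * \<rho> ^ n"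
  proof (cases "n = 0")
    case True
    thus ?thesis using c_nonneg by simp
  next
    case False
    have "(T ^^ Suc n) x = (T ^^ n) (T x)" by (simp add: funpow_swap1)
    hence "norm (d ((T ^^ n) x) ((T ^^ Suc n) x))
          \<le> norm (d ((T ^^ n) x) ((U ^^ n) x)) + norm (d ((T ^^ n) (T x)) ((U ^^ n) x))"
      using norm_cs_dist_triangle[of "(T ^^ n) x" "(T ^^ n) (T x)" "(U ^^ n) x"]
        cs_dist_commute[of "(U ^^ n) x"] by simp
    also have "\<dots> \<le> c x x * r x x ^ n + c (T x) x * r (T x) x ^ n"
      using paired_contraction False by (intro add_mono) simp_all
    also have "\<dots> \<le> c x x * \<rho> ^ n + c (T x) x * \<rho> ^ n"
      unfolding \<rho>_def using c_nonneg r_nonneg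
      by (intro add_mono mult_left_mono power_mono) simp_all
    also have "\<dots> \<le> (c x x + c (T x) x + norm (d x (T x))) * \<rho> ^ n"
      using \<open>0 \<le> \<rho>\<close> by (simp add: distrib_right)
    finally show ?thesis .
  qed
qed

lemma cs_converges_paired_orbit:
  assumes "cs_converges d (\<lambda>n. (T ^^ n) x) u"
  shows "cs_converges d (\<lambda>n. (U ^^ n) x) u"
proof (rule cs_converges_if_dist_tendsto_0[OF assms])
  show "(\<lambda>n. norm (d ((U ^^ n) x) ((T ^^ n) x))) \<longlonglongrightarrow> 0"
  proof (rule tendsto_sandwich[OF _ _ tendsto_const paired_contraction_tendsto_0])
    have "norm (d ((U ^^ n) x) ((T ^^ n) x)) \<le> c x x * r x x ^ n" if "1 \<le> n" for n
      using paired_contraction[OF that, of x x] by (simp add: cs_dist_commute)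
    thus "\<forall>\<^sub>F n in sequentially. norm (d ((U ^^ n) x) ((T ^^ n) x)) \<le> c x x * r x x ^ n"
      unfolding eventually_sequentially by blast
  qed simp
qed

lemma paired_fixed_points_eq:
  assumes "T v = v" and "U u = u"
  shows "v = u"
proof -
  have "norm (d v u) \<le> c v u * r v u ^ n" if "1 \<le> n" for n
    using paired_contraction[OF that, of v u] assms by (simp add: funpow_fixpoint)
  hence "norm (d v u) \<le> 0"
    by (intro LIMSEQ_le_const[OF paired_contraction_tendsto_0]) blast
  thus ?thesis by (simp add: cs_dist_eq_0_iff)
qed

end

end

theorem corollary3p20:
  fixes d :: "'x \<Rightarrow> 'x \<Rightarrow> 'a::unital_cstar_algebra"
    and T S :: "'x \<Rightarrow> 'x"
    and q \<delta> :: "'x \<Rightarrow> 'x \<Rightarrow> 'a"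
  assumes "cs_metric d"
    and "cs_complete d"
    and "\<And>x y. norm (q x y) < 1"
    and "\<And>x y. cs_pos (\<delta> x y)"
    and "\<And>x y n. n \<ge> 1 \<Longrightarrow>
           cs_le (d ((T ^^ n) x) (((S \<circ> T) ^^ n) y))
                 ((cs_star (q x y)) ^ n * \<delta> x y * (q x y) ^ n)"
    and "orbitally_continuous d T"
    and "orbitally_continuous d (S \<circ> T)"
  shows "\<exists>!u. T u = u \<and> S u = u"
proof -
  note metric = assms(1)
  have contraction: "norm (d ((T ^^ n) x) (((S \<circ> T) ^^ n) y)) \<le> norm (\<delta> x y) * (norm (q x y) ^ 2) ^ n"
    if "1 \<le> n" for x y n
    using norm_cs_dist_le_if_cs_le[OF metric assms(5)[OF that]] norm_star_power_mult_power_le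
    by (rule order_trans)
  have rate: "0 \<le> norm (q x y) ^ 2" "norm (q x y) ^ 2 < 1" for x y
    using assms(3)[of x y] by (simp_all add: power_less_one_iff)
  note paired_estimate = contraction norm_ge_zero rate
  fix x0 :: 'x
  obtain u where u: "cs_converges d (\<lambda>n. (T ^^ n) x0) u"
    using cs_cauchy_orbit[OF metric paired_estimate] assms(2) unfolding cs_complete_def by blast
  have Tu: "T u = u" by (rule orbitally_continuous_fixed_point[OF metric assms(6) u])
  have STu: "(S \<circ> T) u = u"
    by (rule orbitally_continuous_fixed_point[OF metric assms(7) cs_converges_paired_orbit[OF metric paired_estimate u]])
  show ?thesis
  proof (rule ex1I[of _ u])
    show "T u = u \<and> S u = u" using Tu STu by simp
    fix v assume "T v = v \<and> S v = v"
    thus "v = u" using paired_fixed_points_eq[OF metric paired_estimate _ STu] by simp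
  qed
qed

end
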